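(* The left ideals $I_H,I_V,I_D$ of $\mathbb Z[\Gamma^2]$ are finitely generated, namely $I_H=\langle (1+S,1),\,(1+U+U^2,1),\,(1,1-T)\rangle$, $I_V=\langle (1,1+S),\,(1,1+U+U^2),\,(1-US,1)\rangle$, and $I_D=\langle (1,1)+(S,S),\,(1,1)+(U,U)+(U^2,U^2)\rangle$.
   Context: $\Gamma=PSL_2(\mathbb Z)$ acting on $\mathbb P^1(\mathbb Q)$; $S=\pm\begin{pmatrix}0&-1\\1&0\end{pmatrix}$, $U=\pm\begin{pmatrix}0&1\\-1&1\end{pmatrix}$, $T=\pm\begin{pmatrix}1&1\\0&1\end{pmatrix}$, so $US=\pm\begin{pmatrix}1&0\\1&1\end{pmatrix}$. Identify $\mathbb Z[\Gamma^2]=\mathbb Z[\Gamma]\otimes\mathbb Z[\Gamma]$, writing $(a,b)=a\otimes b$; $\langle\cdots\rangle$ means the left ideal generated. Let $\Gamma_\infty=\{T^n\}$, $\Gamma_0=\{(US)^n\}$, and for $\gamma\in\Gamma$ let $\partial\gamma=[\gamma\infty]-[\gamma0]\in\mathbb Z[\mathbb P^1(\mathbb Q)]$. For $\sum_i\lambda_i(\alpha_i,\beta_i)\in\mathbb Z[\Gamma^2]$ with distinct pairs: it lies in $I_H$ iff $\sum_{i:\beta_i\in C}\lambda_i\partial\alpha_i=0$ for every $C\in\Gamma/\Gamma_\infty$; in $I_V$ iff $\sum_{i:\alpha_i\in C}\lambda_i\partial\beta_i=0$ for every $C\in\Gamma/\Gamma_0$; in $I_D$ iff $\sum_{i:\beta_i\alpha_i^{-1}=g}\lambda_i\partial\alpha_i=0$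 for every $g\in\Gamma$. *)

theory Defs
  imports Complex_Main "HOL-Library.Function_Algebras"
begin

text \<open>A matrix (a b; c d) is the tuple (a,b,c,d).  An element of PSL_2(Z) is
  represented by its unique sign-normalised representative of determinant 1
  (c > 0, or c = 0 and d > 0).\<close>

typedef psl = "{(a,b,c,d). (a::int)*d - b*c = 1 \<and> (0 < c \<or> (c = 0 \<and> 0 < d))}"
  by (rule exI[of _ "(1,0,0,1)"]) simp

fun mat_mul :: "int \<times> int \<times> int \<times> int \<Rightarrow> int \<times> int \<times> int \<times> int \<Rightarrow> int \<times> int \<times> int \<times> int" where
  "mat_mul (a,b,c,d) (e,f,g,h) = (a*e+b*g, a*f+b*h, c*e+d*g, c*f+d*h)"

fun sign_norm :: "int \<times> int \<times> int \<times> int \<Rightarrow> int \<times> int \<times> int \<times> int" where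
  "sign_norm (a,b,c,d) = (if 0 < c \<or> (c = 0 \<and> 0 < d) then (a,b,c,d) else (-a,-b,-c,-d))"

definition mk_psl :: "int \<times> int \<times> int \<times> int \<Rightarrow> psl" where
  "mk_psl m = Abs_psl (sign_norm m)"

definition pmul :: "psl \<Rightarrow> psl \<Rightarrow> psl" where
  "pmul x y = mk_psl (mat_mul (Rep_psl x) (Rep_psl y))"

definition pone :: psl where
  "pone = mk_psl (1,0,0,1)"

definition pinv :: "psl \<Rightarrow> psl" where
  "pinv x = (case Rep_psl x of (a,b,c,d) \<Rightarrow> mk_psl (d,-b,-c,a))"

definition ppow :: "psl \<Rightarrow> int \<Rightarrow> psl" where
  "ppow g n = (if 0 \<le> n then (pmul g ^^ nat n) pone else (pmul (pinv g) ^^ nat (-n)) pone)"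

definition S :: psl where "S = mk_psl (0,-1,1,0)"
definition U :: psl where "U = mk_psl (0,1,-1,1)"
definition T :: psl where "T = mk_psl (1,1,0,1)"

definition Gamma_inf :: "psl set" where "Gamma_inf = {ppow T n | n. True}"
definition Gamma_0 :: "psl set" where "Gamma_0 = {ppow (pmul U S) n | n. True}"

definition lcoset :: "psl \<Rightarrow> psl set \<Rightarrow> psl set" where
  "lcoset g H = {pmul g h | h. h \<in> H}"

datatype P1 = Inf | Fin rat

definition act :: "psl \<Rightarrow> P1 \<Rightarrow> P1" where
  "act g p = (case Rep_psl g of (a,b,c,d) \<Rightarrow>
     (case p of
        Inf \<Rightarrow> (if c = 0 then Inf else Fin (of_int a / of_int c))
      | Fin q \<Rightarrow> (if of_int c * q + of_int d = 0 then Inf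
                  else Fin ((of_int a * q + of_int b) / (of_int c * q + of_int d)))))"

text \<open>Elements of Z[P^1(Q)] are represented as functions P1 \<Rightarrow> int (finitely supported);
  \<open>bdry g = [g \<infinity>] - [g 0]\<close>.\<close>
definition bdry :: "psl \<Rightarrow> P1 \<Rightarrow> int" where
  "bdry g = (\<lambda>p. (if act g Inf = p then 1 else 0) - (if act g (Fin 0) = p then 1 else 0))"

text \<open>Elements: finitely supported functions (psl \<times> psl) \<Rightarrow> int; the pair (a,b) = a \<otimes> b
  is the basis element \<open>delta (a,b)\<close>.\<close>

definition ZG :: "(psl \<times> psl \<Rightarrow> int) set" where
  "ZG = {f. finite {x. f x \<noteq> 0}}"

definition delta :: "psl \<times> psl \<Rightarrow> psl \<times> psl \<Rightarrow> int" where
  "delta x = (\<lambda>z. if z = x then 1 else 0)"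

definition pmul2 :: "psl \<times> psl \<Rightarrow> psl \<times> psl \<Rightarrow> psl \<times> psl" where
  "pmul2 x y = (pmul (fst x) (fst y), pmul (snd x) (snd y))"

definition pinv2 :: "psl \<times> psl \<Rightarrow> psl \<times> psl" where
  "pinv2 x = (pinv (fst x), pinv (snd x))"

definition gmul :: "(psl \<times> psl \<Rightarrow> int) \<Rightarrow> (psl \<times> psl \<Rightarrow> int) \<Rightarrow> psl \<times> psl \<Rightarrow> int" where
  "gmul f g = (\<lambda>z. \<Sum>x\<in>{x. f x \<noteq> 0}. f x * g (pmul2 (pinv2 x) z))"

inductive_set left_ideal :: "(psl \<times> psl \<Rightarrow> int) set \<Rightarrow> (psl \<times> psl \<Rightarrow> int) set"
  for G where
  gen: "g \<in> G \<Longrightarrow> g \<in> left_ideal G"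
| zero: "(\<lambda>_. 0) \<in> left_ideal G"
| add: "x \<in> left_ideal G \<Longrightarrow> y \<in> left_ideal G \<Longrightarrow> x + y \<in> left_ideal G"
| lmult: "r \<in> ZG \<Longrightarrow> x \<in> left_ideal G \<Longrightarrow> gmul r x \<in> left_ideal G"

definition I_H :: "(psl \<times> psl \<Rightarrow> int) set" where
  "I_H = {f \<in> ZG. \<forall>C \<in> {lcoset g Gamma_inf | g. True}. \<forall>p.
            (\<Sum>x\<in>{x. f x \<noteq> 0 \<and> snd x \<in> C}. f x * bdry (fst x) p) = 0}"

definition I_V :: "(psl \<times> psl \<Rightarrow> int) set" where
  "I_V = {f \<in> ZG. \<forall>C \<in> {lcoset g Gamma_0 | g. True}. \<forall>p.
            (\<Sum>x\<in>{x. f x \<noteq> 0 \<and> fst x \<in> C}. f x * bdry (snd x) p) = 0}"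

definition I_D :: "(psl \<times> psl \<Rightarrow> int) set" where
  "I_D = {f \<in> ZG. \<forall>g. \<forall>p.
            (\<Sum>x\<in>{x. f x \<noteq> 0 \<and> pmul (snd x) (pinv (fst x)) = g}. f x * bdry (fst x) p) = 0}"

end

theory Submission
  imports Defs
begin

text \<open>Each of \<open>I_H\<close>, \<open>I_V\<close>, \<open>I_D\<close> consists of the elements on which the boundary map
  \<open>\<partial>: Z[\<Gamma>] \<rightarrow> Z[P\<^sup>1(Q)]\<close>, applied to one coordinate, vanishes fibre by fibre for a
  partition of \<open>\<Gamma>\<^sup>2\<close>. By Manin's theorem the kernel of \<open>\<partial>\<close> is spanned by the right
  translates of \<open>1 + S\<close> and \<open>1 + U + U\<^sup>2\<close>: writing \<open>[g]\<close> as the difference of the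
  continued-fraction paths from \<open>\<infinity>\<close> to \<open>g\<infinity>\<close> and to \<open>g0\<close>, up to a defect, the paths
  cancel in every cycle, and a descent on the bottom row of \<open>g\<close> shows that every defect lies in
  the span. For \<open>I_D\<close> the fibres \<open>\<beta>\<alpha>\<^sup>-\<^sup>1 = g\<close> are copies of \<open>\<Gamma>\<close>, and Manin's
  relations transported into a fibre are left translates of the two generators. For \<open>I_H\<close> and
  \<open>I_V\<close> the third generator first moves the coset coordinate of every term to a fixed
  representative of its coset, after which the fibres are again copies of \<open>\<Gamma>\<close>.\<close>

section \<open>The group structure of PSL_2(Z)\<close>

type_synonym mat2 = "int \<times> int \<times> int \<times> int"

fun det2 :: "mat2 \<Rightarrow> int" where "det2 (a,b,c,d) = a*d - b*c"
fun neg2 :: "mat2 \<Rightarrow> mat2" where "neg2 (a,b,c,d) = (-a,-b,-c,-d)"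
fun adj2 :: "mat2 \<Rightarrow> mat2" where "adj2 (a,b,c,d) = (d,-b,-c,a)"

lemma det2_mat_mul: "det2 (mat_mul m n) = det2 m * det2 n"
  by (cases m; cases n) (simp add: algebra_simps)

lemma mat_mul_assoc: "mat_mul (mat_mul m n) p = mat_mul m (mat_mul n p)"
  by (cases m; cases n; cases p) (simp add: algebra_simps)

lemma neg2_neg2 [simp]: "neg2 (neg2 m) = m"
  and det2_neg2 [simp]: "det2 (neg2 m) = det2 m"
  and det2_adj2 [simp]: "det2 (adj2 m) = det2 m"
  and adj2_neg2: "adj2 (neg2 m) = neg2 (adj2 m)"
  by (cases m; simp add: algebra_simps)+

lemma mat_mul_neg2_left: "mat_mul (neg2 m) n = neg2 (mat_mul m n)"
  and mat_mul_neg2_right: "mat_mul m (neg2 n) = neg2 (mat_mul m n)"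
  by (cases m; cases n; simp add: algebra_simps)+

lemma mat_mul_adj2: "det2 m = 1 \<Longrightarrow> mat_mul m (adj2 m) = (1,0,0,1)"
  and adj2_mat_mul: "det2 m = 1 \<Longrightarrow> mat_mul (adj2 m) m = (1,0,0,1)"
  by (cases m; simp add: algebra_simps)+

lemma mat_mul_one_left: "mat_mul (1,0,0,1) m = m"
  and mat_mul_one_right: "mat_mul m (1,0,0,1) = m"
  by (cases m; simp)+

lemma sign_norm_eq: "sign_norm m = m \<or> sign_norm m = neg2 m"
  by (cases m) auto

lemma Rep_mk_psl: "det2 m = 1 \<Longrightarrow> Rep_psl (mk_psl m) = sign_norm m"
  unfolding mk_psl_def
proof (rule Abs_psl_inverse)
  assume "det2 m = 1"
  moreover obtain a b c d where m: "m = (a,b,c,d)"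
    by (cases m)
  ultimately have "a*d - b*c = 1" "c = 0 \<Longrightarrow> d \<noteq> 0"
    by auto
  then show "sign_norm m \<in> {(a,b,c,d). a*d - b*c = 1 \<and> (0 < c \<or> c = 0 \<and> 0 < d)}"
    using m by (auto simp: algebra_simps)
qed

lemma det2_Rep_psl: "det2 (Rep_psl x) = 1"
  and sign_norm_Rep_psl: "sign_norm (Rep_psl x) = Rep_psl x"
  using Rep_psl[of x] by (auto split: prod.splits)

lemma mk_psl_Rep_psl: "mk_psl (Rep_psl x) = x"
  unfolding mk_psl_def by (simp add: sign_norm_Rep_psl Rep_psl_inverse)

lemma psl_cases: obtains a b c d where "x = mk_psl (a,b,c,d)" "a*d - b*c = 1"
  using mk_psl_Rep_psl[of x] det2_Rep_psl[of x] by (cases "Rep_psl x") auto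

lemma mk_psl_neg2: "det2 m = 1 \<Longrightarrow> mk_psl (neg2 m) = mk_psl m"
proof -
  assume "det2 m = 1"
  moreover obtain a b c d where m: "m = (a,b,c,d)"
    by (cases m)
  ultimately have "c = 0 \<Longrightarrow> d \<noteq> 0"
    by auto
  then show ?thesis
    using m by (auto simp: mk_psl_def)
qed

lemma mk_psl_uminus: "a*d - b*c = 1 \<Longrightarrow> mk_psl (-a,-b,-c,-d) = mk_psl (a,b,c,d)"
  using mk_psl_neg2[of "(a,b,c,d)"] by simp

lemma Rep_mk_psl_cases: "det2 m = 1 \<Longrightarrow> Rep_psl (mk_psl m) = m \<or> Rep_psl (mk_psl m) = neg2 m"
  using Rep_mk_psl sign_norm_eq by metis

lemma pmul_mk_psl: "det2 m = 1 \<Longrightarrow> det2 n = 1 \<Longrightarrow> pmul (mk_psl m) (mk_psl n) = mk_psl (mat_mul m n)"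
  unfolding pmul_def using Rep_mk_psl_cases[of m] Rep_mk_psl_cases[of n]
  by (auto simp: mat_mul_neg2_left mat_mul_neg2_right mk_psl_neg2 det2_mat_mul)

lemma pinv_mk_psl: "det2 m = 1 \<Longrightarrow> pinv (mk_psl m) = mk_psl (adj2 m)"
proof -
  assume m: "det2 m = 1"
  have "pinv (mk_psl m) = mk_psl (adj2 (Rep_psl (mk_psl m)))"
    unfolding pinv_def by (simp split: prod.split)
  then show ?thesis
    using Rep_mk_psl_cases[OF m] by (auto simp: adj2_neg2 mk_psl_neg2 m)
qed

lemma pmul_assoc [simp]: "pmul (pmul x y) z = pmul x (pmul y z)"
proof -
  obtain m n p where "x = mk_psl m" "y = mk_psl n" "z = mk_psl p" "det2 m = 1" "det2 n = 1" "det2 p = 1"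
    by (metis mk_psl_Rep_psl det2_Rep_psl)
  then show ?thesis
    by (simp add: pmul_mk_psl det2_mat_mul mat_mul_assoc)
qed

lemma pmul_pone_left [simp]: "pmul pone x = x"
  and pmul_pone_right [simp]: "pmul x pone = x"
  by (cases x rule: psl_cases; simp add: pone_def pmul_mk_psl mat_mul_one_left mat_mul_one_right)+

lemma pmul_pinv_left [simp]: "pmul (pinv x) x = pone"
  and pmul_pinv_right [simp]: "pmul x (pinv x) = pone"
  by (cases x rule: psl_cases;
      simp add: pone_def pinv_mk_psl pmul_mk_psl adj2_mat_mul mat_mul_adj2 algebra_simps)+

lemma pmul_pinv_cancel_left [simp]: "pmul (pinv x) (pmul x y) = y"
  and pmul_pinv_cancel_left' [simp]: "pmul x (pmul (pinv x) y) = y"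
  by (simp flip: pmul_assoc)+

lemma pinv_unique: "pmul x y = pone \<Longrightarrow> pinv x = y"
  by (metis pmul_pinv_cancel_left pmul_pone_right)

lemma pinv_pinv [simp]: "pinv (pinv x) = x"
  and pinv_pmul [simp]: "pinv (pmul x y) = pmul (pinv y) (pinv x)"
  and pinv_pone [simp]: "pinv pone = pone"
  by (rule pinv_unique; simp)+

lemma pmul_cancel_left [simp]: "pmul x y = pmul x z \<longleftrightarrow> y = z"
  by (metis pmul_pinv_cancel_left)

section \<open>The action on P^1(Q)\<close>

definition pt :: "int \<Rightarrow> int \<Rightarrow> P1" where
  "pt x y = (if y = 0 then Inf else Fin (of_int x / of_int y))"

lemma pt_uminus [simp]: "pt (-x) (-y) = pt x y"
  by (simp add: pt_def)

lemma pt_exists: "\<exists>x y. (x,y) \<noteq> (0,0) \<and> p = pt x y"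
proof (cases p)
  case Inf
  then show ?thesis
    by (intro exI[of _ 1] exI[of _ 0]) (simp add: pt_def)
next
  case (Fin q)
  obtain x y where q: "quotient_of q = (x,y)"
    by (cases "quotient_of q")
  then show ?thesis
    using Fin quotient_of_denom_pos[OF q] quotient_of_div[OF q]
    by (intro exI[of _ x] exI[of _ y]) (simp add: pt_def)
qed

lemma act_pt_Rep:
  assumes "Rep_psl g = (a,b,c,d)" "(x,y) \<noteq> (0,0)" "a*d - b*c = 1"
  shows "act g (pt x y) = pt (a*x + b*y) (c*x + d*y)"
proof (cases "y = 0")
  case True
  then show ?thesis
    using assms by (simp add: act_def pt_def)
next
  case False
  let ?q = "of_int x / of_int y :: rat"
  have denom: "of_int c * ?q + of_int d = of_int (c*x + d*y) / of_int y"
    and numer: "of_int a * ?q + of_int b = of_int (a*x + b*y) / of_int y"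
    using False by (simp_all add: field_simps)
  have denom_zero: "of_int c * ?q + of_int d = 0 \<longleftrightarrow> c*x + d*y = 0"
    using False by (metis denom divide_eq_0_iff of_int_eq_0_iff)
  show ?thesis
  proof (cases "c*x + d*y = 0")
    case True
    then show ?thesis
      using assms False denom_zero by (simp add: act_def pt_def)
  next
    case nonzero: False
    have "(of_int a * ?q + of_int b) / (of_int c * ?q + of_int d)
        = of_int (a*x + b*y) / (of_int (c*x + d*y) :: rat)"
      using False nonzero by (simp only: numer denom) simp
    then show ?thesis
      using assms False nonzero denom_zero by (simp add: act_def pt_def)
  qed
qed

lemma act_pt:
  assumes "a*d - b*c = 1" "(x,y) \<noteq> (0,0)"
  shows "act (mk_psl (a,b,c,d)) (pt x y) = pt (a*x + b*y) (c*x + d*y)"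
  using Rep_mk_psl_cases[of "(a,b,c,d)"] assms act_pt_Rep[of "mk_psl (a,b,c,d)"]
    pt_uminus[of "a*x + b*y" "c*x + d*y"]
  by (auto simp: algebra_simps)

lemma act_Inf: "a*d - b*c = 1 \<Longrightarrow> act (mk_psl (a,b,c,d)) Inf = pt a c"
  and act_zero: "a*d - b*c = 1 \<Longrightarrow> act (mk_psl (a,b,c,d)) (Fin 0) = pt b d"
  and act_one: "a*d - b*c = 1 \<Longrightarrow> act (mk_psl (a,b,c,d)) (Fin 1) = pt (a+b) (c+d)"
  using act_pt[of a d b c 1 0] act_pt[of a d b c 0 1] act_pt[of a d b c 1 1]
  by (simp_all add: pt_def)

lemma unimodular_nonzero:
  assumes "a*d - b*c = (1::int)" "(x,y) \<noteq> (0,0)"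
  shows "(a*x + b*y, c*x + d*y) \<noteq> (0,0)"
proof
  assume "(a*x + b*y, c*x + d*y) = (0,0)"
  then have "d*(a*x + b*y) - b*(c*x + d*y) = 0" "a*(c*x + d*y) - c*(a*x + b*y) = 0"
    by auto
  then have "(a*d - b*c)*x = 0" "(a*d - b*c)*y = 0"
    by (simp_all add: algebra_simps)
  then show False
    using assms by simp
qed

lemma act_pmul: "act (pmul g h) p = act g (act h p)"
proof -
  obtain a b c d where g: "g = mk_psl (a,b,c,d)" "a*d - b*c = 1"
    by (rule psl_cases)
  obtain e f k l where h: "h = mk_psl (e,f,k,l)" "e*l - f*k = 1"
    by (rule psl_cases)
  obtain x y where p: "(x,y) \<noteq> (0,0)" "p = pt x y"
    using pt_exists by metis
  have "(a*e + b*k)*(c*f + d*l) - (a*f + b*l)*(c*e + d*k) = (a*d - b*c)*(e*l - f*k)"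
    by (simp add: algebra_simps)
  then have "act (pmul g h) p = pt ((a*e + b*k)*x + (a*f + b*l)*y) ((c*e + d*k)*x + (c*f + d*l)*y)"
    using g h p by (simp add: pmul_mk_psl act_pt)
  also have "\<dots> = act g (pt (e*x + f*y) (k*x + l*y))"
    using act_pt[OF g(2) unimodular_nonzero[OF h(2) p(1)]] g by (simp add: algebra_simps)
  also have "\<dots> = act g (act h p)"
    using act_pt[OF h(2) p(1)] h p by simp
  finally show ?thesis .
qed

lemma act_pone [simp]: "act pone p = p"
  using pt_exists[of p] act_pt[of 1 1 0 0] by (auto simp: pone_def)

lemma act_eq_iff: "act g x = p \<longleftrightarrow> x = act (pinv g) p"
  by (metis act_pmul act_pone pmul_pinv_left)

lemma bdry_pmul: "bdry (pmul a g) p = bdry g (act (pinv a) p)"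
  unfolding bdry_def by (simp add: act_pmul act_eq_iff)

lemma UU_eq: "pmul U U = mk_psl (-1,1,-1,0)"
  by (simp add: U_def pmul_mk_psl)

lemma act_S_Inf: "act S Inf = Fin 0"
  and act_S_zero: "act S (Fin 0) = Inf"
  and act_U_Inf: "act U Inf = Fin 0"
  and act_U_zero: "act U (Fin 0) = Fin 1"
  and act_U_one: "act U (Fin 1) = Inf"
  by (simp_all add: S_def U_def act_Inf act_zero act_one pt_def)

lemma act_UU_Inf: "act (pmul U U) Inf = Fin 1"
  and act_UU_zero: "act (pmul U U) (Fin 0) = Inf"
  by (simp_all only: UU_eq) (simp_all add: act_Inf act_zero pt_def)

lemma bdry_S_relation: "bdry pone p + bdry S p = 0"
  and bdry_U_relation: "bdry pone p + bdry U p + bdry (pmul U U) p = 0"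
  by (auto simp: bdry_def act_S_Inf act_S_zero act_U_Inf act_U_zero act_UU_Inf act_UU_zero)

section \<open>Manin's presentation of the boundary kernel\<close>

lemma combination_closed:
  fixes I :: "('a \<Rightarrow> int) set"
  assumes "(\<lambda>_. 0) \<in> I"
    and "\<And>f g. f \<in> I \<Longrightarrow> g \<in> I \<Longrightarrow> f + g \<in> I"
    and "\<And>k f. f \<in> I \<Longrightarrow> (\<lambda>z. k * f z) \<in> I"
    and "finite A" "\<And>y. y \<in> A \<Longrightarrow> u y \<in> I"
  shows "(\<lambda>z. \<Sum>y\<in>A. c y * u y z) \<in> I"
  using assms(4,5)
proof (induction A rule: finite_induct)
  case (insert y A)
  have "(\<lambda>z. \<Sum>x\<in>insert y A. c x * u x z) = (\<lambda>z. c y * u y z) + (\<lambda>z. \<Sum>x\<in>A. c x * u x z)"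
    using insert.hyps by (auto simp: fun_eq_iff)
  then show ?case
    using insert assms(2,3) by simp
qed (use assms(1) in simp)

lemma finite_support_expansion:
  fixes f :: "'a \<Rightarrow> int"
  assumes "finite {x. f x \<noteq> 0}"
  shows "f z = (\<Sum>x\<in>{x. f x \<noteq> 0}. f x * (if z = x then 1 else 0))"
proof -
  have "(\<Sum>x\<in>{x. f x \<noteq> 0}. f x * (if z = x then 1 else 0)) = (\<Sum>x\<in>{x. f x \<noteq> 0}. if z = x then f x else 0)"
    by (rule sum.cong) auto
  also have "\<dots> = f z"
    using assms by (simp add: sum.delta)
  finally show ?thesis ..
qed

definition delta1 :: "psl \<Rightarrow> psl \<Rightarrow> int" where
  "delta1 g = (\<lambda>z. if z = g then 1 else 0)"

inductive_set manin_span :: "(psl \<Rightarrow> int) set" where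
  zero: "(\<lambda>_. 0) \<in> manin_span"
| add: "x \<in> manin_span \<Longrightarrow> y \<in> manin_span \<Longrightarrow> x + y \<in> manin_span"
| scale: "x \<in> manin_span \<Longrightarrow> (\<lambda>z. k * x z) \<in> manin_span"
| S_relation: "delta1 g + delta1 (pmul g S) \<in> manin_span"
| U_relation: "delta1 g + delta1 (pmul g U) + delta1 (pmul g (pmul U U)) \<in> manin_span"

lemma manin_span_uminus: "x \<in> manin_span \<Longrightarrow> - x \<in> manin_span"
proof -
  assume "x \<in> manin_span"
  moreover have "- x = (\<lambda>z. (-1) * x z)"
    by (simp add: fun_eq_iff)
  ultimately show ?thesis
    using manin_span.scale[of x "-1"] by simp
qed

lemma manin_span_diff: "x \<in> manin_span \<Longrightarrow> y \<in> manin_span \<Longrightarrow> x - y \<in> manin_span"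
  using manin_span.add[of x "- y"] manin_span_uminus[of y]
  by (simp add: diff_conv_add_uminus del: add_uminus_conv_diff)

definition boundary_kernel :: "(psl \<Rightarrow> int) set" where
  "boundary_kernel = {\<phi>. finite {a. \<phi> a \<noteq> 0} \<and> (\<forall>p. (\<Sum>a\<in>{a. \<phi> a \<noteq> 0}. \<phi> a * bdry a p) = 0)}"

lemma boundary_kernel_sum_endpoints:
  assumes "\<phi> \<in> boundary_kernel"
  shows "(\<Sum>a\<in>{a. \<phi> a \<noteq> 0}. \<phi> a * (F (act a Inf) - F (act a (Fin 0)))) = (0::int)"
proof -
  define A where "A = {a. \<phi> a \<noteq> 0}"
  define B where "B = (\<lambda>a. act a Inf) ` A \<union> (\<lambda>a. act a (Fin 0)) ` A"
  have "finite A" "\<And>p. (\<Sum>a\<in>A. \<phi> a * bdry a p) = 0"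
    using assms by (simp_all add: boundary_kernel_def A_def)
  have "(\<Sum>p\<in>B. F p * bdry a p) = F (act a Inf) - F (act a (Fin 0))" if "a \<in> A" for a
  proof -
    have "(\<Sum>p\<in>B. F p * bdry a p)
        = (\<Sum>p\<in>B. if act a Inf = p then F p else 0) - (\<Sum>p\<in>B. if act a (Fin 0) = p then F p else 0)"
      by (simp add: bdry_def sum_subtractf[symmetric]) (rule sum.cong; auto)
    also have "\<dots> = F (act a Inf) - F (act a (Fin 0))"
      using that \<open>finite A\<close> by (simp add: B_def)
    finally show ?thesis .
  qed
  then have "(\<Sum>a\<in>A. \<phi> a * (F (act a Inf) - F (act a (Fin 0))))
      = (\<Sum>a\<in>A. \<phi> a * (\<Sum>p\<in>B. F p * bdry a p))"
    by simp
  also have "\<dots> = (\<Sum>p\<in>B. F p * (\<Sum>a\<in>A. \<phi> a * bdry a p))"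
    by (simp add: sum_distrib_left sum.swap[of _ A B] mult.left_commute)
  also have "\<dots> = 0"
    using \<open>\<And>p. (\<Sum>a\<in>A. \<phi> a * bdry a p) = 0\<close> by simp
  finally show ?thesis
    by (simp add: A_def)
qed

definition reduced_completion :: "int \<Rightarrow> int \<Rightarrow> int \<times> int" where
  "reduced_completion b d = (SOME (a,c). a*d - b*c = 1 \<and> 0 \<le> c \<and> c < d)"

lemma coprime_of_det: "a*d - b*c = (1::int) \<Longrightarrow> coprime b d"
proof (rule coprimeI)
  fix k
  assume det: "a*d - b*c = 1" and "k dvd b" "k dvd d"
  have "k dvd a*d - b*c"
    using \<open>k dvd b\<close> \<open>k dvd d\<close> by simp
  then show "is_unit k"
    unfolding det .
qed

lemma reduced_completion_exists:
  assumes "coprime b d" "(0::int) < d"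
  shows "\<exists>a c. a*d - b*c = 1 \<and> 0 \<le> c \<and> c < d"
proof -
  obtain u v where uv: "u*b + v*d = 1"
    using bezout_int[of b d] assms(1) by auto
  define q r where "q = (-u) div d" and "r = (-u) mod d"
  have "-u = q*d + r"
    by (simp add: q_def r_def)
  then have "(v - b*q)*d - b*r = 1"
    using uv by algebra
  moreover have "0 \<le> r" "r < d"
    using assms(2) by (simp_all add: r_def)
  ultimately show ?thesis
    by blast
qed

lemma reduced_completion_unique:
  assumes "a*d - b*c = 1" "a'*d - b*c' = 1" "0 \<le> c" "c < d" "0 \<le> c'" "c' < (d::int)"
  shows "a = a' \<and> c = c'"
proof -
  have "b * (c - c') = (a - a') * d"
    using assms(1,2) by (simp add: algebra_simps)
  then have "d dvd c - c'"
    using coprime_of_det[OF assms(1)] by (metis coprime_commute coprime_dvd_mult_right_iff dvd_triv_right)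
  moreover have "\<not> d dvd c - c'" if "c \<noteq> c'"
  proof (cases "c' < c")
    case True
    then show ?thesis
      using assms zdvd_not_zless[of "c - c'" d] by simp
  next
    case False
    then show ?thesis
      using that assms zdvd_not_zless[of "c' - c" d] by (simp add: dvd_diff_commute)
  qed
  ultimately have "c = c'"
    by blast
  moreover from this have "(a - a') * d = 0"
    using assms(1,2) by (simp add: algebra_simps)
  ultimately show ?thesis
    using assms(3,4) by simp
qed

lemma reduced_completion_eq_iff:
  assumes "coprime b d" "0 < d"
  shows "reduced_completion b d = (a,c) \<longleftrightarrow> a*d - b*c = 1 \<and> 0 \<le> c \<and> c < d"
proof -
  obtain a0 c0 where ac0: "reduced_completion b d = (a0,c0)"
    by fastforce
  have "case reduced_completion b d of (a,c) \<Rightarrow> a*d - b*c = 1 \<and> 0 \<le> c \<and> c < d"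
    unfolding reduced_completion_def by (rule someI_ex) (use reduced_completion_exists[OF assms] in auto)
  then have "a0*d - b*c0 = 1 \<and> 0 \<le> c0 \<and> c0 < d"
    by (simp add: ac0)
  then show ?thesis
    unfolding ac0 using reduced_completion_unique[of a0 d b c0 a c] by blast
qed

definition convergent_matrix :: "rat \<Rightarrow> psl" where
  "convergent_matrix q = (case quotient_of q of (b,d) \<Rightarrow> case reduced_completion b d of (a,c) \<Rightarrow> mk_psl (a,b,c,d))"

lemma convergent_matrix_cases:
  obtains a b c d where "quotient_of q = (b,d)" "convergent_matrix q = mk_psl (a,b,c,d)"
    "a*d - b*c = 1" "0 \<le> c" "c < d"
proof -
  obtain b d where q: "quotient_of q = (b,d)"
    by fastforce
  obtain a c where ac: "reduced_completion b d = (a,c)"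
    by fastforce
  have "coprime b d" "0 < d"
    using quotient_of_coprime[OF q] quotient_of_denom_pos[OF q] by simp_all
  then have "a*d - b*c = 1 \<and> 0 \<le> c \<and> c < d"
    using ac reduced_completion_eq_iff by blast
  moreover have "convergent_matrix q = mk_psl (a,b,c,d)"
    by (simp add: convergent_matrix_def q ac)
  ultimately show ?thesis
    using that q by blast
qed

lemma mk_psl_eq_convergent_matrix:
  assumes "a*d - b*c = 1" "0 \<le> c" "c < d"
  shows "mk_psl (a,b,c,d) = convergent_matrix (of_int b / of_int d)"
proof -
  have "coprime b d" "0 < d"
    using coprime_of_det[OF assms(1)] assms(2,3) by simp_all
  then have "quotient_of (of_int b / of_int d) = (b,d)"
    by (simp add: Fract_of_int_quotient[symmetric] quotient_of_Fract)
  then show ?thesis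
    using assms \<open>coprime b d\<close> \<open>0 < d\<close>
    by (simp add: convergent_matrix_def reduced_completion_eq_iff[THEN iffD2])
qed

lemma act_convergent_matrix_zero: "act (convergent_matrix q) (Fin 0) = Fin q"
proof -
  obtain a b c d where "quotient_of q = (b,d)" "convergent_matrix q = mk_psl (a,b,c,d)"
    "a*d - b*c = 1" "0 \<le> c" "c < d"
    by (rule convergent_matrix_cases)
  then show ?thesis
    using quotient_of_div[of q b d] by (simp add: act_zero pt_def)
qed

fun denominator :: "P1 \<Rightarrow> nat" where
  "denominator Inf = 0"
| "denominator (Fin q) = nat (snd (quotient_of q))"

lemma denominator_act_convergent_matrix_Inf:
  "denominator (act (convergent_matrix q) Inf) < denominator (Fin q)"
proof -
  obtain a b c d where q: "quotient_of q = (b,d)" "convergent_matrix q = mk_psl (a,b,c,d)"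
    and det: "a*d - b*c = 1" and c: "0 \<le> c" "c < d"
    by (rule convergent_matrix_cases)
  show ?thesis
  proof (cases "c = 0")
    case False
    have "coprime a c"
      using coprime_of_det[of "-b" c a "-d"] det by (simp add: algebra_simps)
    then have "quotient_of (of_int a / of_int c) = (a,c)"
      using False c by (simp add: Fract_of_int_quotient[symmetric] quotient_of_Fract)
    then show ?thesis
      using q det c False by (simp add: act_Inf pt_def)
  qed (use q det c in \<open>simp add: act_Inf pt_def\<close>)
qed

text \<open>\<open>cusp_path q\<close> is the chain of convergent matrices leading from \<open>\<infinity>\<close> to \<open>q\<close> along the
  continued fraction of \<open>q\<close>; its boundary is \<open>[q] - [\<infinity>]\<close>.\<close>
function cusp_path :: "P1 \<Rightarrow> psl \<Rightarrow> int" where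
  "cusp_path Inf = 0"
| "cusp_path (Fin q) = cusp_path (act (convergent_matrix q) Inf) - delta1 (convergent_matrix q)"
  by pat_completeness auto
termination
  by (relation "measure denominator")
     (simp_all only: wf_measure in_measure denominator_act_convergent_matrix_Inf)

definition path_defect :: "psl \<Rightarrow> psl \<Rightarrow> int" where
  "path_defect g = cusp_path (act g Inf) - cusp_path (act g (Fin 0)) - delta1 g"

lemma path_defect_convergent_matrix: "path_defect (convergent_matrix q) = 0"
  by (simp add: path_defect_def act_convergent_matrix_zero)

lemma path_defect_pmul_S: "path_defect (pmul g S) = - path_defect g - (delta1 g + delta1 (pmul g S))"
  by (simp add: path_defect_def act_pmul act_S_Inf act_S_zero algebra_simps)

lemma path_defect_U_relation:
  "path_defect g = - (delta1 g + delta1 (pmul g U) + delta1 (pmul g (pmul U U)))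
                   - path_defect (pmul g U) - path_defect (pmul g (pmul U U))"
  by (simp add: path_defect_def act_pmul act_U_Inf act_U_zero act_U_one algebra_simps
      del: pmul_assoc)

lemma path_defect_pmul_S_in_manin_span_iff:
  "path_defect (pmul g S) \<in> manin_span \<longleftrightarrow> path_defect g \<in> manin_span"
proof -
  have "path_defect g = - path_defect (pmul g S) - (delta1 g + delta1 (pmul g S))"
    by (simp add: path_defect_pmul_S)
  then show ?thesis
    using path_defect_pmul_S manin_span_diff manin_span_uminus manin_span.S_relation by metis
qed

lemma path_defect_in_manin_span_if_pmul_U:
  assumes "path_defect (pmul g U) \<in> manin_span" "path_defect (pmul g (pmul U U)) \<in> manin_span"
  shows "path_defect g \<in> manin_span"
  by (subst path_defect_U_relation)
     (intro manin_span_diff manin_span_uminus manin_span.U_relation assms)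

lemma path_defect_reduced:
  "a*d - b*c = 1 \<Longrightarrow> 0 \<le> c \<Longrightarrow> c < d \<Longrightarrow> path_defect (mk_psl (a,b,c,d)) \<in> manin_span"
  using manin_span.zero
  by (simp add: mk_psl_eq_convergent_matrix path_defect_convergent_matrix zero_fun_def)

definition height :: "psl \<Rightarrow> int" where
  "height g = (case Rep_psl g of (a,b,c,d) \<Rightarrow> max \<bar>c\<bar> \<bar>d\<bar>)"

lemma height_mk_psl: "a*d - b*c = 1 \<Longrightarrow> height (mk_psl (a,b,c,d)) = max \<bar>c\<bar> \<bar>d\<bar>"
  using Rep_mk_psl_cases[of "(a,b,c,d)"] by (auto simp: height_def)

text \<open>A lower-left entry in \<open>[-d, 0)\<close> is moved into \<open>[0, d)\<close> by the \<open>U\<close>-relation: one of the two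
  other terms is a reduced matrix times \<open>S\<close>, the other has smaller height or is itself reduced.\<close>
lemma path_defect_negative_entry:
  assumes IH: "\<And>h. height h < d \<Longrightarrow> path_defect h \<in> manin_span"
    and det: "a*d - b*c = 1" and c: "-d \<le> c" "c < 0"
  shows "path_defect (mk_psl (a,b,c,d)) \<in> manin_span"
proof (rule path_defect_in_manin_span_if_pmul_U)
  have det': "(a+b)*d - b*(c+d) = 1"
    using det by (simp add: algebra_simps)
  have "pmul (mk_psl (a,b,c,d)) U = mk_psl (-b, a+b, -d, c+d)"
    using det by (simp add: U_def pmul_mk_psl)
  also have "\<dots> = pmul (mk_psl (a+b, b, c+d, d)) S"
    using det' mk_psl_uminus[of b "-(c+d)" "-(a+b)" d]
    by (simp add: S_def pmul_mk_psl algebra_simps)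
  finally show "path_defect (pmul (mk_psl (a,b,c,d)) U) \<in> manin_span"
    using path_defect_reduced[OF det'] c by (simp add: path_defect_pmul_S_in_manin_span_iff)
  have UU: "pmul (mk_psl (a,b,c,d)) (pmul U U) = mk_psl (-a-b, a, -c-d, c)"
    using det by (simp add: UU_eq pmul_mk_psl)
  show "path_defect (pmul (mk_psl (a,b,c,d)) (pmul U U)) \<in> manin_span"
  proof (cases "c + d = 0")
    case True
    then have "c = -d"
      by simp
    then have "mk_psl (-a-b, a, -c-d, c) = mk_psl (a+b, -a, 0, d)"
      using det' mk_psl_uminus[of "a+b" d "-a" 0] by (simp add: algebra_simps)
    then show ?thesis
      using UU path_defect_reduced[of "a+b" d "-a" 0] det' c True by (simp add: algebra_simps)
  next
    case False
    have "(-a-b)*c - a*(-c-d) = 1"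
      using det by (simp add: algebra_simps)
    then have "height (mk_psl (-a-b, a, -c-d, c)) < d"
      using c False by (simp add: height_mk_psl)
    then show ?thesis
      using UU IH by simp
  qed
qed

lemma path_defect_positive_denominator:
  assumes IH: "\<And>h. height h < d \<Longrightarrow> path_defect h \<in> manin_span"
    and det: "a*d - b*c = 1" and c: "-d \<le> c" "c \<le> d"
  shows "path_defect (mk_psl (a,b,c,d)) \<in> manin_span"
proof -
  consider "0 \<le> c" "c < d" | "c < 0" | "c = d"
    using c by linarith
  then show ?thesis
  proof cases
    case 1
    then show ?thesis
      using path_defect_reduced det by blast
  next
    case 2
    then show ?thesis
      using path_defect_negative_entry[OF IH det c(1)] by blast
  next
    case 3
    have det': "(-b)*d - a*(-d) = 1"
      using det 3 by (simp add: algebra_simps)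
    have gS: "pmul (mk_psl (a,b,c,d)) S = mk_psl (-b, a, -d, d)"
      using det 3 mk_psl_uminus[OF det'] by (simp add: S_def pmul_mk_psl)
    have "d \<noteq> 0"
      using det 3 by (cases "d = 0") simp_all
    then have "0 < d"
      using c 3 by linarith
    then have "path_defect (mk_psl (-b, a, -d, d)) \<in> manin_span"
      using path_defect_negative_entry[OF IH det'] by simp
    then show ?thesis
      using gS path_defect_pmul_S_in_manin_span_iff[of "mk_psl (a,b,c,d)"] by simp
  qed
qed

lemma path_defect_dominant_denominator:
  assumes IH: "\<And>h. height h < \<bar>d\<bar> \<Longrightarrow> path_defect h \<in> manin_span"
    and det: "a*d - b*c = 1" and cd: "\<bar>c\<bar> \<le> \<bar>d\<bar>"
  shows "path_defect (mk_psl (a,b,c,d)) \<in> manin_span"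
proof -
  have "d \<noteq> 0"
    using det cd by (cases "d = 0") simp_all
  then consider "0 < d" | "d < 0"
    by linarith
  then show ?thesis
  proof cases
    case 1
    then have "\<And>h. height h < d \<Longrightarrow> path_defect h \<in> manin_span"
      using IH by simp
    then show ?thesis
      using path_defect_positive_denominator det cd 1 by (simp add: abs_le_iff)
  next
    case 2
    then have "\<And>h. height h < -d \<Longrightarrow> path_defect h \<in> manin_span"
      using IH by simp
    then have "path_defect (mk_psl (-a,-b,-c,-d)) \<in> manin_span"
      by (rule path_defect_positive_denominator)
         (use det cd 2 in \<open>simp_all add: abs_le_iff algebra_simps\<close>)
    then show ?thesis
      using mk_psl_uminus[OF det] by simp
  qed
qed

lemma height_nonneg: "0 \<le> height g"
  by (auto simp: height_def le_max_iff_disj split: prod.split)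

theorem path_defect_in_manin_span: "path_defect g \<in> manin_span"
proof (induction g rule: measure_induct_rule[where f = "\<lambda>g. nat (height g)"])
  case (less g)
  obtain a b c d where g: "g = mk_psl (a,b,c,d)" and det: "a*d - b*c = 1"
    by (rule psl_cases)
  have IH: "path_defect h \<in> manin_span" if "height h < height g" for h
    using less that height_nonneg[of h] by simp
  show ?case
  proof (cases "\<bar>c\<bar> \<le> \<bar>d\<bar>")
    case True
    then show ?thesis
      using path_defect_dominant_denominator[OF IH det] g det by (simp add: height_mk_psl)
  next
    case False
    have det': "b*(-c) - (-a)*d = 1"
      using det by (simp add: algebra_simps)
    have "path_defect (mk_psl (b, -a, d, -c)) \<in> manin_span"
      using path_defect_dominant_denominator[OF IH det'] g det False by (simp add: height_mk_psl)
    moreover have "pmul g S = mk_psl (b, -a, d, -c)"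
      using g det by (simp add: S_def pmul_mk_psl)
    ultimately show ?thesis
      using path_defect_pmul_S_in_manin_span_iff[of g] by simp
  qed
qed

text \<open>Since \<open>[a] = cusp_path (a\<infinity>) - cusp_path (a0) - path_defect a\<close> and the cusp paths cancel
  in a cycle, every cycle is minus the corresponding combination of path defects.\<close>
theorem boundary_kernel_subset_manin_span: "boundary_kernel \<subseteq> manin_span"
proof
  fix \<phi>
  assume \<phi>: "\<phi> \<in> boundary_kernel"
  define A where "A = {a. \<phi> a \<noteq> 0}"
  have "finite A"
    using \<phi> by (simp add: boundary_kernel_def A_def)
  have "\<phi> z = (\<Sum>a\<in>A. (- \<phi> a) * path_defect a z)" for z
  proof -
    have "\<phi> z = (\<Sum>a\<in>A. \<phi> a * delta1 a z)"
      unfolding A_def delta1_def by (rule finite_support_expansion) (simp add: \<open>finite A\<close>[unfolded A_def])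
    also have "\<dots> = (\<Sum>a\<in>A. \<phi> a * (cusp_path (act a Inf) z - cusp_path (act a (Fin 0)) z))
                    - (\<Sum>a\<in>A. \<phi> a * path_defect a z)"
      by (simp add: path_defect_def right_diff_distrib sum_subtractf)
    also have "\<dots> = (\<Sum>a\<in>A. (- \<phi> a) * path_defect a z)"
      using boundary_kernel_sum_endpoints[OF \<phi>, of "\<lambda>p. cusp_path p z"]
      by (simp add: A_def sum_negf)
    finally show ?thesis .
  qed
  then have "\<phi> = (\<lambda>z. \<Sum>a\<in>A. (- \<phi> a) * path_defect a z)"
    by blast
  also have "\<dots> \<in> manin_span"
    by (rule combination_closed[OF manin_span.zero manin_span.add manin_span.scale \<open>finite A\<close>
          path_defect_in_manin_span])
  finally show "\<phi> \<in> manin_span" .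
qed

section \<open>Left ideals of the group ring Z[\<Gamma>^2]\<close>

lemma pmul2_Pair [simp]: "pmul2 (a,b) (c,d) = (pmul a c, pmul b d)"
  by (simp add: pmul2_def)

lemma pinv2_Pair [simp]: "pinv2 (a,b) = (pinv a, pinv b)"
  by (simp add: pinv2_def)

lemma fst_pmul2: "fst (pmul2 y w) = pmul (fst y) (fst w)"
  by (simp add: pmul2_def)

lemma pmul2_pinv2_cancel_left [simp]: "pmul2 (pinv2 y) (pmul2 y w) = w"
  and pmul2_pinv2_cancel_left' [simp]: "pmul2 y (pmul2 (pinv2 y) w) = w"
  by (cases y; cases w; simp)+

lemma pmul2_pinv2_eq_iff: "pmul2 (pinv2 y) z = w \<longleftrightarrow> z = pmul2 y w"
  by auto

lemma mem_image_pmul2: "z \<in> pmul2 y ` A \<longleftrightarrow> pmul2 (pinv2 y) z \<in> A"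
  by (metis image_eqI imageE pmul2_pinv2_cancel_left pmul2_pinv2_cancel_left')

lemma inj_pmul2: "inj (pmul2 y)"
  by (rule inj_on_inverseI[of _ "pmul2 (pinv2 y)"]) simp

definition translate :: "psl \<times> psl \<Rightarrow> (psl \<times> psl \<Rightarrow> int) \<Rightarrow> psl \<times> psl \<Rightarrow> int" where
  "translate y f = (\<lambda>z. f (pmul2 (pinv2 y) z))"

lemma translate_delta: "translate y (delta w) = delta (pmul2 y w)"
  by (simp add: translate_def delta_def pmul2_pinv2_eq_iff)

lemma translate_add: "translate y (f + g) = translate y f + translate y g"
  and translate_diff: "translate y (f - g) = translate y f - translate y g"
  by (simp_all add: translate_def fun_eq_iff)

lemma support_translate: "{z. translate y f z \<noteq> 0} = pmul2 y ` {x. f x \<noteq> 0}"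
  by (simp add: translate_def mem_image_pmul2 set_eq_iff)

lemma ZG_add: "f \<in> ZG \<Longrightarrow> g \<in> ZG \<Longrightarrow> f + g \<in> ZG"
  unfolding ZG_def by (auto intro: finite_subset[of _ "{x. f x \<noteq> 0} \<union> {x. g x \<noteq> 0}"])

lemma ZG_scale: "f \<in> ZG \<Longrightarrow> (\<lambda>z. k * f z) \<in> ZG"
  unfolding ZG_def by (auto intro: finite_subset[of _ "{x. f x \<noteq> 0}"])

lemma ZG_diff: "f \<in> ZG \<Longrightarrow> g \<in> ZG \<Longrightarrow> f - g \<in> ZG"
  unfolding ZG_def by (auto intro: finite_subset[of _ "{x. f x \<noteq> 0} \<union> {x. g x \<noteq> 0}"])

lemma ZG_delta: "delta w \<in> ZG"
  by (simp add: ZG_def delta_def)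

lemma ZG_translate: "f \<in> ZG \<Longrightarrow> translate y f \<in> ZG"
  by (simp add: ZG_def support_translate)

lemma gmul_eq_sum_translate: "gmul r x = (\<lambda>z. \<Sum>y\<in>{y. r y \<noteq> 0}. r y * translate y x z)"
  by (simp add: gmul_def translate_def)

lemma gmul_delta: "gmul (delta y) x = translate y x"
  by (simp add: gmul_eq_sum_translate delta_def translate_def)

lemma left_ideal_translate: "f \<in> left_ideal G \<Longrightarrow> translate y f \<in> left_ideal G"
  using left_ideal.lmult[OF ZG_delta] gmul_delta by metis

lemma left_ideal_scale: "f \<in> left_ideal G \<Longrightarrow> (\<lambda>z. k * f z) \<in> left_ideal G"
proof -
  assume f: "f \<in> left_ideal G"
  have "gmul (\<lambda>z. k * delta (pone,pone) z) f = (\<lambda>z. k * f z)"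
    by (cases "k = 0") (auto simp: gmul_def delta_def fun_eq_iff)
  then show ?thesis
    using left_ideal.lmult[OF ZG_scale[OF ZG_delta] f] by metis
qed

lemma left_ideal_diff: "f \<in> left_ideal G \<Longrightarrow> g \<in> left_ideal G \<Longrightarrow> f - g \<in> left_ideal G"
proof -
  assume "f \<in> left_ideal G" "g \<in> left_ideal G"
  moreover have "f - g = f + (\<lambda>z. (-1) * g z)"
    by (simp add: fun_eq_iff)
  ultimately show ?thesis
    using left_ideal.add left_ideal_scale by metis
qed

lemma left_ideal_diff_trans:
  "x - y \<in> left_ideal G \<Longrightarrow> y - z \<in> left_ideal G \<Longrightarrow> x - z \<in> left_ideal G"
  using left_ideal.add[of "x - y" G "y - z"] by simp

lemma left_ideal_diff_swap: "x - y \<in> left_ideal G \<Longrightarrow> y - x \<in> left_ideal G"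
proof -
  assume "x - y \<in> left_ideal G"
  then have "(\<lambda>_. 0) - (x - y) \<in> left_ideal G"
    by (rule left_ideal_diff[OF left_ideal.zero])
  moreover have "(\<lambda>_. 0) - (x - y) = y - x"
    by (simp add: fun_eq_iff)
  ultimately show ?thesis
    by simp
qed

lemmas left_ideal_combination =
  combination_closed[OF left_ideal.zero left_ideal.add left_ideal_scale]

lemma left_ideal_subset:
  assumes "(\<lambda>_. 0) \<in> I"
    and "\<And>f g. f \<in> I \<Longrightarrow> g \<in> I \<Longrightarrow> f + g \<in> I"
    and "\<And>k f. f \<in> I \<Longrightarrow> (\<lambda>z. k * f z) \<in> I"
    and "\<And>y f. f \<in> I \<Longrightarrow> translate y f \<in> I"
    and "G \<subseteq> I"
  shows "left_ideal G \<subseteq> I"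
proof
  fix f
  assume "f \<in> left_ideal G"
  then show "f \<in> I"
  proof (induction rule: left_ideal.induct)
    case (lmult r x)
    then have "(\<lambda>z. \<Sum>y\<in>{y. r y \<noteq> 0}. r y * translate y x z) \<in> I"
      using combination_closed[OF assms(1-3), of "{y. r y \<noteq> 0}" "\<lambda>y. translate y x" r] assms(4)
      by (simp add: ZG_def)
    then show ?case
      by (simp add: gmul_eq_sum_translate)
  qed (use assms in blast)+
qed

section \<open>Ideals cut out by vanishing fibre sums\<close>

definition fibre_sum :: "(psl \<times> psl \<Rightarrow> int) \<Rightarrow> (psl \<times> psl \<Rightarrow> bool) \<Rightarrow> (psl \<times> psl \<Rightarrow> int) \<Rightarrow> int" where
  "fibre_sum f Q h = (\<Sum>x\<in>{x. f x \<noteq> 0 \<and> Q x}. f x * h x)"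

lemma fibre_sum_superset:
  assumes "finite B" "{x. f x \<noteq> 0} \<subseteq> B"
  shows "fibre_sum f Q h = (\<Sum>x\<in>B. if Q x then f x * h x else 0)"
proof -
  have "fibre_sum f Q h = (\<Sum>x\<in>{x\<in>B. Q x}. f x * h x)"
    unfolding fibre_sum_def by (rule sum.mono_neutral_left) (use assms in auto)
  also have "\<dots> = (\<Sum>x\<in>B. if Q x then f x * h x else 0)"
    using assms(1) by (simp add: sum.inter_filter)
  finally show ?thesis .
qed

lemma fibre_sum_add:
  assumes "f \<in> ZG" "g \<in> ZG"
  shows "fibre_sum (f + g) Q h = fibre_sum f Q h + fibre_sum g Q h"
proof -
  define B where "B = {x. f x \<noteq> 0} \<union> {x. g x \<noteq> 0}"
  have B: "finite B" "{x. f x \<noteq> 0} \<subseteq> B" "{x. g x \<noteq> 0} \<subseteq> B" "{x. (f + g) x \<noteq> 0} \<subseteq> B"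
    using assms by (auto simp: B_def ZG_def)
  show ?thesis
    unfolding fibre_sum_superset[OF B(1,2)] fibre_sum_superset[OF B(1,3)] fibre_sum_superset[OF B(1,4)]
    by (simp add: sum.distrib[symmetric] distrib_right if_distrib cong: if_cong)
qed

lemma fibre_sum_scale:
  assumes "f \<in> ZG"
  shows "fibre_sum (\<lambda>z. k * f z) Q h = k * fibre_sum f Q h"
proof -
  have B: "finite {x. f x \<noteq> 0}" "{x. k * f x \<noteq> 0} \<subseteq> {x. f x \<noteq> 0}"
    using assms by (auto simp: ZG_def)
  show ?thesis
    unfolding fibre_sum_superset[OF B] fibre_sum_superset[OF B(1) order_refl]
    by (simp add: sum_distrib_left if_distrib mult.assoc cong: if_cong)
qed

lemma fibre_sum_diff:
  assumes "f \<in> ZG" "g \<in> ZG"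
  shows "fibre_sum (f - g) Q h = fibre_sum f Q h - fibre_sum g Q h"
proof -
  have diff: "f - g = f + (\<lambda>z. (-1) * g z)"
    by (simp add: fun_eq_iff)
  show ?thesis
    unfolding diff fibre_sum_add[OF assms(1) ZG_scale[OF assms(2)]] fibre_sum_scale[OF assms(2)]
    by simp
qed

lemma fibre_sum_delta: "fibre_sum (delta x) Q h = (if Q x then h x else 0)"
  by (simp add: fibre_sum_superset[of "{x}"] delta_def)

lemma fibre_sum_translate:
  "fibre_sum (translate y f) Q h = fibre_sum f (\<lambda>w. Q (pmul2 y w)) (\<lambda>w. h (pmul2 y w))"
proof -
  have "{x. translate y f x \<noteq> 0 \<and> Q x} = pmul2 y ` {w. f w \<noteq> 0 \<and> Q (pmul2 y w)}"
    by (auto simp: translate_def mem_image_pmul2)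
  then show ?thesis
    unfolding fibre_sum_def
    by (simp add: sum.reindex[OF inj_on_subset[OF inj_pmul2]] translate_def)
qed

definition sum_kernel :: "((psl \<times> psl \<Rightarrow> bool) \<times> (psl \<times> psl \<Rightarrow> int)) set \<Rightarrow> (psl \<times> psl \<Rightarrow> int) set" where
  "sum_kernel F = {f \<in> ZG. \<forall>Q h. (Q,h) \<in> F \<longrightarrow> fibre_sum f Q h = 0}"

lemma sum_kernel_diff: "f \<in> sum_kernel F \<Longrightarrow> g \<in> sum_kernel F \<Longrightarrow> f - g \<in> sum_kernel F"
  by (auto simp: sum_kernel_def ZG_diff fibre_sum_diff)

lemma left_ideal_subset_sum_kernel:
  assumes pullback: "\<And>y Q h. (Q,h) \<in> F \<Longrightarrow> (\<lambda>w. Q (pmul2 y w), \<lambda>w. h (pmul2 y w)) \<in> F"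
    and gens: "G \<subseteq> sum_kernel F"
  shows "left_ideal G \<subseteq> sum_kernel F"
proof (rule left_ideal_subset[OF _ _ _ _ gens])
  show "(\<lambda>_. 0) \<in> sum_kernel F"
    by (simp add: sum_kernel_def ZG_def fibre_sum_def)
  show "f + g \<in> sum_kernel F" if "f \<in> sum_kernel F" "g \<in> sum_kernel F" for f g
    using that by (auto simp: sum_kernel_def ZG_add fibre_sum_add)
  show "(\<lambda>z. k * f z) \<in> sum_kernel F" if "f \<in> sum_kernel F" for k f
    using that by (auto simp: sum_kernel_def ZG_scale fibre_sum_scale)
  show "translate y f \<in> sum_kernel F" if "f \<in> sum_kernel F" for y f
    using that pullback by (auto simp: sum_kernel_def ZG_translate fibre_sum_translate)
qed

section \<open>Fibrewise reduction to Manin's presentation\<close>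

text \<open>A partition of \<open>\<Gamma>\<^sup>2\<close> into fibres \<open>label x = c\<close>, each identified with \<open>\<Gamma>\<close> via \<open>embed c\<close>.\<close>
locale fibration =
  fixes label :: "psl \<times> psl \<Rightarrow> 'b" and embed :: "'b \<Rightarrow> psl \<Rightarrow> psl \<times> psl" and coord :: "psl \<times> psl \<Rightarrow> psl"
  assumes label_embed [simp]: "label (embed c a) = c"
    and coord_embed [simp]: "coord (embed c a) = a"
    and embed_label_coord [simp]: "embed (label x) (coord x) = x"
begin

definition lift :: "'b \<Rightarrow> (psl \<Rightarrow> int) \<Rightarrow> psl \<times> psl \<Rightarrow> int" where
  "lift c \<phi> = (\<lambda>z. if label z = c then \<phi> (coord z) else 0)"

lemma lift_delta1: "lift c (delta1 g) = delta (embed c g)"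
  unfolding lift_def delta1_def delta_def by (metis coord_embed embed_label_coord label_embed)

lemma lift_add: "lift c (x + y) = lift c x + lift c y"
  by (simp add: lift_def fun_eq_iff)

lemma lift_in_left_ideal:
  assumes S_rel: "\<And>c g. delta (embed c g) + delta (embed c (pmul g S)) \<in> left_ideal G"
    and U_rel: "\<And>c g. delta (embed c g) + delta (embed c (pmul g U))
                       + delta (embed c (pmul g (pmul U U))) \<in> left_ideal G"
    and "\<phi> \<in> manin_span"
  shows "lift c \<phi> \<in> left_ideal G"
  using \<open>\<phi> \<in> manin_span\<close>
proof (induction rule: manin_span.induct)
  case zero
  then show ?case
    using left_ideal.zero by (simp add: lift_def)
next
  case (add x y)
  then show ?case
    unfolding lift_add using left_ideal.add by blast
next
  case (scale x k)
  have "lift c (\<lambda>z. k * x z) = (\<lambda>z. k * lift c x z)"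
    by (simp add: lift_def fun_eq_iff)
  then show ?case
    using scale.IH left_ideal_scale by metis
next
  case (S_relation g)
  have "lift c (delta1 g + delta1 (pmul g S)) = delta (embed c g) + delta (embed c (pmul g S))"
    by (simp only: lift_add lift_delta1)
  then show ?case
    using S_rel by metis
next
  case (U_relation g)
  have "lift c (delta1 g + delta1 (pmul g U) + delta1 (pmul g (pmul U U)))
      = delta (embed c g) + delta (embed c (pmul g U)) + delta (embed c (pmul g (pmul U U)))"
    by (simp only: lift_add lift_delta1)
  then show ?case
    using U_rel by metis
qed

lemma restriction_in_boundary_kernel:
  assumes "f \<in> ZG" "\<And>p. fibre_sum f (\<lambda>x. label x = c) (\<lambda>x. bdry (coord x) p) = 0"
  shows "(\<lambda>a. f (embed c a)) \<in> boundary_kernel"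
proof -
  have support: "{x. f x \<noteq> 0 \<and> label x = c} = embed c ` {a. f (embed c a) \<noteq> 0}"
    by (auto simp: image_iff) (metis embed_label_coord)
  have "inj (embed c)"
    by (metis coord_embed injI)
  then have "finite {a. f (embed c a) \<noteq> 0}"
    using finite_vimageI[of "{x. f x \<noteq> 0}" "embed c"] \<open>f \<in> ZG\<close> by (simp add: ZG_def vimage_def)
  moreover have "(\<Sum>a\<in>{a. f (embed c a) \<noteq> 0}. f (embed c a) * bdry a p) = 0" for p
    using assms(2)[of p] \<open>inj (embed c)\<close>
    by (simp add: fibre_sum_def support sum.reindex[OF inj_on_subset])
  ultimately show ?thesis
    by (simp add: boundary_kernel_def)
qed

theorem fibrewise_in_left_ideal:
  assumes S_rel: "\<And>c g. delta (embed c g) + delta (embed c (pmul g S)) \<in> left_ideal G"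
    and U_rel: "\<And>c g. delta (embed c g) + delta (embed c (pmul g U))
                       + delta (embed c (pmul g (pmul U U))) \<in> left_ideal G"
    and "f \<in> ZG" and fibre: "\<And>c p. fibre_sum f (\<lambda>x. label x = c) (\<lambda>x. bdry (coord x) p) = 0"
  shows "f \<in> left_ideal G"
proof -
  define C where "C = label ` {x. f x \<noteq> 0}"
  have "finite C"
    using \<open>f \<in> ZG\<close> by (simp add: C_def ZG_def)
  have "f z = (\<Sum>c\<in>C. 1 * lift c (\<lambda>a. f (embed c a)) z)" for z
  proof -
    have "(\<Sum>c\<in>C. 1 * lift c (\<lambda>a. f (embed c a)) z) = (\<Sum>c\<in>C. if label z = c then f z else 0)"
      by (rule sum.cong) (auto simp: lift_def)
    also have "\<dots> = f z"
      using \<open>finite C\<close> by (auto simp: C_def)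
    finally show ?thesis ..
  qed
  then have "f = (\<lambda>z. \<Sum>c\<in>C. 1 * lift c (\<lambda>a. f (embed c a)) z)"
    by blast
  also have "\<dots> \<in> left_ideal G"
    using \<open>finite C\<close> lift_in_left_ideal[OF S_rel U_rel] boundary_kernel_subset_manin_span
      restriction_in_boundary_kernel[OF \<open>f \<in> ZG\<close> fibre]
    by (intro left_ideal_combination) auto
  finally show ?thesis .
qed

end

section \<open>The diagonal ideal I_D\<close>

definition ratio :: "psl \<times> psl \<Rightarrow> psl" where
  "ratio x = pmul (snd x) (pinv (fst x))"

interpretation diagonal: fibration ratio "\<lambda>c a. (a, pmul c a)" fst
  by unfold_locales (auto simp: ratio_def)

definition diagonal_generators :: "(psl \<times> psl \<Rightarrow> int) set" where
  "diagonal_generators = {delta (pone,pone) + delta (S,S),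
                          delta (pone,pone) + delta (U,U) + delta (pmul U U, pmul U U)}"

definition diagonal_functionals :: "((psl \<times> psl \<Rightarrow> bool) \<times> (psl \<times> psl \<Rightarrow> int)) set" where
  "diagonal_functionals = {(\<lambda>x. ratio x = g, \<lambda>x. bdry (fst x) p) | g p. True}"

lemma I_D_eq_sum_kernel: "I_D = sum_kernel diagonal_functionals"
  by (auto simp: I_D_def sum_kernel_def fibre_sum_def ratio_def diagonal_functionals_def)

lemma ratio_pmul2: "ratio (pmul2 y w) = g \<longleftrightarrow> ratio w = pmul (pinv (snd y)) (pmul g (fst y))"
proof -
  have "ratio (pmul2 y w) = pmul (snd y) (pmul (ratio w) (pinv (fst y)))"
    by (cases y; cases w) (simp add: ratio_def)
  then show ?thesis
    by (metis pmul_assoc pmul_pinv_cancel_left pmul_pinv_cancel_left' pmul_pone_right)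
qed

lemma diagonal_generators_subset: "diagonal_generators \<subseteq> sum_kernel diagonal_functionals"
proof -
  have ratios: "ratio (pone,pone) = pone" "ratio (S,S) = pone" "ratio (U,U) = pone"
      "ratio (pmul U U, pmul U U) = pone"
    by (simp_all add: ratio_def)
  have "fibre_sum (delta (pone,pone) + delta (S,S)) (\<lambda>x. ratio x = g) (\<lambda>x. bdry (fst x) p) = 0"
    and "fibre_sum (delta (pone,pone) + delta (U,U) + delta (pmul U U, pmul U U))
           (\<lambda>x. ratio x = g) (\<lambda>x. bdry (fst x) p) = 0" for g p
    using bdry_S_relation[of p] bdry_U_relation[of p]
    by (simp_all add: fibre_sum_add ZG_add ZG_delta fibre_sum_delta ratios)
  then show ?thesis
    by (auto simp: diagonal_generators_def diagonal_functionals_def sum_kernel_def ZG_add ZG_delta)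
qed

lemma diagonal_functionals_pullback:
  assumes "(Q,k) \<in> diagonal_functionals"
  shows "(\<lambda>w. Q (pmul2 y w), \<lambda>w. k (pmul2 y w)) \<in> diagonal_functionals"
proof -
  obtain g p where "Q = (\<lambda>x. ratio x = g)" "k = (\<lambda>x. bdry (fst x) p)"
    using assms by (auto simp: diagonal_functionals_def)
  then show ?thesis
    unfolding diagonal_functionals_def
    by (intro CollectI exI[of _ "pmul (pinv (snd y)) (pmul g (fst y))"] exI[of _ "act (pinv (fst y)) p"])
       (simp add: ratio_pmul2 bdry_pmul fst_pmul2)
qed

lemma left_ideal_diagonal_generators_subset: "left_ideal diagonal_generators \<subseteq> I_D"
  unfolding I_D_eq_sum_kernel
  by (rule left_ideal_subset_sum_kernel[OF diagonal_functionals_pullback diagonal_generators_subset])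

lemma diagonal_relations:
  "delta (a, pmul c a) + delta (pmul a S, pmul c (pmul a S)) \<in> left_ideal diagonal_generators"
  "delta (a, pmul c a) + delta (pmul a U, pmul c (pmul a U))
     + delta (pmul a (pmul U U), pmul c (pmul a (pmul U U))) \<in> left_ideal diagonal_generators"
proof -
  have "delta (pone,pone) + delta (S,S) \<in> left_ideal diagonal_generators"
    "delta (pone,pone) + delta (U,U) + delta (pmul U U, pmul U U) \<in> left_ideal diagonal_generators"
    by (simp_all add: diagonal_generators_def left_ideal.gen)
  from this[THEN left_ideal_translate, of "(a, pmul c a)"] show
    "delta (a, pmul c a) + delta (pmul a S, pmul c (pmul a S)) \<in> left_ideal diagonal_generators"
    "delta (a, pmul c a) + delta (pmul a U, pmul c (pmul a U))
       + delta (pmul a (pmul U U), pmul c (pmul a (pmul U U))) \<in> left_ideal diagonal_generators"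
    by (simp_all add: translate_add translate_delta)
qed

theorem I_D_eq_left_ideal: "I_D = left_ideal diagonal_generators"
proof
  show "I_D \<subseteq> left_ideal diagonal_generators"
  proof
    fix f
    assume "f \<in> I_D"
    then have "f \<in> ZG" "\<And>c p. fibre_sum f (\<lambda>x. ratio x = c) (\<lambda>x. bdry (fst x) p) = 0"
      by (auto simp: I_D_eq_sum_kernel sum_kernel_def diagonal_functionals_def)
    then show "f \<in> left_ideal diagonal_generators"
      by (rule diagonal.fibrewise_in_left_ideal[OF diagonal_relations])
  qed
qed (rule left_ideal_diagonal_generators_subset)

section \<open>Cyclic subgroups and their cosets\<close>

lemma ppow_zero [simp]: "ppow g 0 = pone"
  by (simp add: ppow_def)

lemma ppow_succ: "ppow g (n + 1) = pmul g (ppow g n)"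
proof (cases "0 \<le> n")
  case True
  then have "nat (n + 1) = Suc (nat n)"
    by simp
  then show ?thesis
    using True by (simp add: ppow_def)
next
  case False
  then have "nat (-n) = Suc (nat (-(n + 1)))"
    by simp
  then show ?thesis
    using False by (cases "n + 1 = 0") (simp_all add: ppow_def)
qed

lemma ppow_add: "ppow g (m + n) = pmul (ppow g m) (ppow g n)"
proof (induction m rule: int_induct[where k = 0])
  case (step1 i)
  then show ?case
    using ppow_succ[of g "i + n"] ppow_succ[of g i] by (simp add: add_ac)
next
  case (step2 i)
  then show ?case
    using ppow_succ[of g "i - 1 + n"] ppow_succ[of g "i - 1"] by simp
qed simp

lemma ppow_one [simp]: "ppow g 1 = g"
  using ppow_succ[of g 0] by simp

lemma pinv_ppow: "pinv (ppow g n) = ppow g (-n)"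
  by (rule pinv_unique) (simp flip: ppow_add)

definition cyclic_subgroup :: "psl \<Rightarrow> psl set" where
  "cyclic_subgroup h = {ppow h n | n. True}"

lemma cyclic_subgroup_pmul: "k \<in> cyclic_subgroup h \<Longrightarrow> k' \<in> cyclic_subgroup h \<Longrightarrow> pmul k k' \<in> cyclic_subgroup h"
  and cyclic_subgroup_pinv: "k \<in> cyclic_subgroup h \<Longrightarrow> pinv k \<in> cyclic_subgroup h"
  and pone_in_cyclic_subgroup: "pone \<in> cyclic_subgroup h"
  and generator_in_cyclic_subgroup: "h \<in> cyclic_subgroup h"
  unfolding cyclic_subgroup_def
  by (auto simp: pinv_ppow intro: exI[of _ 0] exI[of _ 1] ppow_add[symmetric])

lemma mem_lcoset: "x \<in> lcoset g H \<longleftrightarrow> pmul (pinv g) x \<in> H"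
  by (auto simp: lcoset_def intro: exI[of _ "pmul (pinv g) x"])

lemma lcoset_cyclic_subgroup_eq:
  assumes "x \<in> lcoset g (cyclic_subgroup h)"
  shows "lcoset x (cyclic_subgroup h) = lcoset g (cyclic_subgroup h)"
proof -
  have k: "pmul (pinv g) x \<in> cyclic_subgroup h"
    using assms by (simp add: mem_lcoset)
  have "pmul (pinv g) z = pmul (pmul (pinv g) x) (pmul (pinv x) z)"
    and "pmul (pinv x) z = pmul (pinv (pmul (pinv g) x)) (pmul (pinv g) z)" for z
    by simp_all
  then show ?thesis
    unfolding set_eq_iff mem_lcoset using k cyclic_subgroup_pmul cyclic_subgroup_pinv by metis
qed

definition coset_rep :: "psl \<Rightarrow> psl \<Rightarrow> psl" where
  "coset_rep h b = (SOME g. g \<in> lcoset b (cyclic_subgroup h))"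

lemma coset_rep_mem: "coset_rep h b \<in> lcoset b (cyclic_subgroup h)"
  unfolding coset_rep_def by (rule someI[of _ b]) (simp add: mem_lcoset pone_in_cyclic_subgroup)

lemma coset_rep_eq: "x \<in> lcoset b (cyclic_subgroup h) \<Longrightarrow> coset_rep h x = coset_rep h b"
  unfolding coset_rep_def by (simp add: lcoset_cyclic_subgroup_eq)

lemma coset_rep_idem: "coset_rep h (coset_rep h b) = coset_rep h b"
  using coset_rep_eq[OF coset_rep_mem] .

section \<open>The coset ideals I_H and I_V\<close>

text \<open>\<open>bcoord\<close> is the coordinate seen by the boundary map, \<open>ccoord\<close> the one taken modulo the
  cyclic subgroup generated by \<open>h\<close>.\<close>
locale coset_fibration =
  fixes pair :: "psl \<Rightarrow> psl \<Rightarrow> psl \<times> psl" and bcoord ccoord :: "psl \<times> psl \<Rightarrow> psl" and h :: psl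
  assumes bcoord_pair [simp]: "bcoord (pair a b) = a"
    and ccoord_pair [simp]: "ccoord (pair a b) = b"
    and pair_coords [simp]: "pair (bcoord x) (ccoord x) = x"
    and pmul2_pair [simp]: "pmul2 (pair a b) (pair c d) = pair (pmul a c) (pmul b d)"
begin

sublocale fibration ccoord "\<lambda>c a. pair a c" bcoord
  by unfold_locales simp_all

definition coset_functionals :: "((psl \<times> psl \<Rightarrow> bool) \<times> (psl \<times> psl \<Rightarrow> int)) set" where
  "coset_functionals = {(\<lambda>x. ccoord x \<in> lcoset g (cyclic_subgroup h), \<lambda>x. bdry (bcoord x) p) | g p. True}"

definition coset_generators :: "(psl \<times> psl \<Rightarrow> int) set" where
  "coset_generators = {delta (pair pone pone) + delta (pair S pone),
                       delta (pair pone pone) + delta (pair U pone) + delta (pair (pmul U U) pone),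
                       delta (pair pone pone) - delta (pair pone h)}"

lemma bcoord_pmul2: "bcoord (pmul2 y w) = pmul (bcoord y) (bcoord w)"
  and ccoord_pmul2: "ccoord (pmul2 y w) = pmul (ccoord y) (ccoord w)"
  by (metis pair_coords pmul2_pair bcoord_pair ccoord_pair)+

lemma coset_functionals_pullback:
  assumes "(Q,k) \<in> coset_functionals"
  shows "(\<lambda>w. Q (pmul2 y w), \<lambda>w. k (pmul2 y w)) \<in> coset_functionals"
proof -
  obtain g p where "Q = (\<lambda>x. ccoord x \<in> lcoset g (cyclic_subgroup h))" "k = (\<lambda>x. bdry (bcoord x) p)"
    using assms by (auto simp: coset_functionals_def)
  then show ?thesis
    unfolding coset_functionals_def
    by (intro CollectI exI[of _ "pmul (pinv (ccoord y)) g"] exI[of _ "act (pinv (bcoord y)) p"])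
       (simp add: ccoord_pmul2 bcoord_pmul2 mem_lcoset bdry_pmul)
qed

lemma coset_generators_subset: "coset_generators \<subseteq> sum_kernel coset_functionals"
proof -
  have "pone \<in> lcoset g (cyclic_subgroup h) \<longleftrightarrow> h \<in> lcoset g (cyclic_subgroup h)" for g
  proof -
    have "pmul (pinv g) h \<in> cyclic_subgroup h" if "pinv g \<in> cyclic_subgroup h"
      using cyclic_subgroup_pmul[OF that generator_in_cyclic_subgroup] .
    moreover have "pinv g \<in> cyclic_subgroup h" if "pmul (pinv g) h \<in> cyclic_subgroup h"
      using cyclic_subgroup_pmul[OF that cyclic_subgroup_pinv[OF generator_in_cyclic_subgroup]] by simp
    ultimately show ?thesis
      by (auto simp: mem_lcoset)
  qed
  then have "fibre_sum (delta (pair pone pone) + delta (pair S pone)) Q k = 0"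
    and "fibre_sum (delta (pair pone pone) + delta (pair U pone) + delta (pair (pmul U U) pone)) Q k = 0"
    and "fibre_sum (delta (pair pone pone) - delta (pair pone h)) Q k = 0"
    if "(Q,k) \<in> coset_functionals" for Q k
    using that bdry_S_relation bdry_U_relation
    by (auto simp: coset_functionals_def fibre_sum_add fibre_sum_diff ZG_add ZG_delta fibre_sum_delta)
  then show ?thesis
    by (auto simp: coset_generators_def sum_kernel_def ZG_add ZG_diff ZG_delta)
qed

lemma left_ideal_coset_generators_subset: "left_ideal coset_generators \<subseteq> sum_kernel coset_functionals"
  by (rule left_ideal_subset_sum_kernel[OF coset_functionals_pullback coset_generators_subset])

lemma coset_relations:
  "delta (pair a b) + delta (pair (pmul a S) b) \<in> left_ideal coset_generators"
  "delta (pair a b) + delta (pair (pmul a U) b) + delta (pair (pmul a (pmul U U)) b)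
     \<in> left_ideal coset_generators"
  "delta (pair a b) - delta (pair a (pmul b h)) \<in> left_ideal coset_generators"
proof -
  have "delta (pair pone pone) + delta (pair S pone) \<in> left_ideal coset_generators"
    "delta (pair pone pone) + delta (pair U pone) + delta (pair (pmul U U) pone) \<in> left_ideal coset_generators"
    "delta (pair pone pone) - delta (pair pone h) \<in> left_ideal coset_generators"
    by (simp_all add: coset_generators_def left_ideal.gen)
  from this[THEN left_ideal_translate, of "pair a b"] show
    "delta (pair a b) + delta (pair (pmul a S) b) \<in> left_ideal coset_generators"
    "delta (pair a b) + delta (pair (pmul a U) b) + delta (pair (pmul a (pmul U U)) b)
       \<in> left_ideal coset_generators"
    "delta (pair a b) - delta (pair a (pmul b h)) \<in> left_ideal coset_generators"
    by (simp_all add: translate_add translate_diff translate_delta)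
qed

lemma cyclic_subgroup_relation:
  assumes "k \<in> cyclic_subgroup h"
  shows "delta (pair a b) - delta (pair a (pmul b k)) \<in> left_ideal coset_generators"
proof -
  obtain n where "k = ppow h n"
    using assms by (auto simp: cyclic_subgroup_def)
  moreover have "\<forall>b. delta (pair a b) - delta (pair a (pmul b (ppow h n))) \<in> left_ideal coset_generators"
  proof (induction n rule: int_induct[where k = 0])
    case base
    show ?case
      using left_ideal.zero by (simp add: zero_fun_def[symmetric])
  next
    case (step1 i)
    show ?case
    proof
      fix b
      have "pmul b (ppow h (i + 1)) = pmul (pmul b h) (ppow h i)"
        by (simp add: ppow_succ)
      then show "delta (pair a b) - delta (pair a (pmul b (ppow h (i + 1)))) \<in> left_ideal coset_generators"
        using left_ideal_diff_trans[OF coset_relations(3)] step1.IH by metis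
    qed
  next
    case (step2 i)
    show ?case
    proof
      fix b
      have "pmul b (ppow h (i - 1)) = pmul (pmul b (pinv h)) (ppow h i)"
        using ppow_succ[of h "i - 1"] by simp
      moreover have "delta (pair a b) - delta (pair a (pmul b (pinv h))) \<in> left_ideal coset_generators"
        using left_ideal_diff_swap[OF coset_relations(3)[of a "pmul b (pinv h)"]] by simp
      ultimately show "delta (pair a b) - delta (pair a (pmul b (ppow h (i - 1)))) \<in> left_ideal coset_generators"
        using left_ideal_diff_trans step2.IH by metis
    qed
  qed
  ultimately show ?thesis
    by blast
qed

definition normalize :: "psl \<times> psl \<Rightarrow> psl \<times> psl" where
  "normalize x = pair (bcoord x) (coset_rep h (ccoord x))"

definition normal_form :: "(psl \<times> psl \<Rightarrow> int) \<Rightarrow> psl \<times> psl \<Rightarrow> int" where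
  "normal_form f = (\<lambda>z. \<Sum>x\<in>{x. f x \<noteq> 0}. f x * delta (normalize x) z)"

lemma diff_normal_form_in_left_ideal:
  assumes "f \<in> ZG"
  shows "f - normal_form f \<in> left_ideal coset_generators"
proof -
  have "pmul (pinv (ccoord x)) (coset_rep h (ccoord x)) \<in> cyclic_subgroup h" for x
    using coset_rep_mem mem_lcoset by metis
  from cyclic_subgroup_relation[OF this, of "bcoord x" "ccoord x" x for x]
  have relation: "delta x - delta (normalize x) \<in> left_ideal coset_generators" for x
    by (simp add: normalize_def)
  have eq: "f - normal_form f = (\<lambda>z. \<Sum>x\<in>{x. f x \<noteq> 0}. f x * (delta x - delta (normalize x)) z)"
  proof
    fix z
    have "f z = (\<Sum>x\<in>{x. f x \<noteq> 0}. f x * delta x z)"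
      unfolding delta_def by (rule finite_support_expansion) (use assms in \<open>simp add: ZG_def\<close>)
    then show "(f - normal_form f) z = (\<Sum>x\<in>{x. f x \<noteq> 0}. f x * (delta x - delta (normalize x)) z)"
      by (simp add: normal_form_def right_diff_distrib sum_subtractf)
  qed
  show ?thesis
    unfolding eq by (rule left_ideal_combination) (use assms relation in \<open>simp_all add: ZG_def fun_diff_def\<close>)
qed

lemma normal_form_support:
  assumes "normal_form f z \<noteq> 0"
  shows "coset_rep h (ccoord z) = ccoord z"
proof -
  have "(\<Sum>x\<in>{x. f x \<noteq> 0}. f x * delta (normalize x) z) \<noteq> 0"
    using assms by (simp add: normal_form_def)
  then obtain x where "f x * delta (normalize x) z \<noteq> 0"
    by (meson sum.not_neutral_contains_not_neutral)
  then have "z = normalize x"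
    by (auto simp: delta_def split: if_splits)
  then show ?thesis
    by (simp add: normalize_def coset_rep_idem)
qed

text \<open>On a normalised support the fibre over a whole coset is the fibre over its representative.\<close>
lemma normal_support_fibre_sum_zero:
  assumes "f \<in> sum_kernel coset_functionals" "\<And>z. f z \<noteq> 0 \<Longrightarrow> coset_rep h (ccoord z) = ccoord z"
  shows "fibre_sum f (\<lambda>x. ccoord x = c) (\<lambda>x. bdry (bcoord x) p) = 0"
proof (cases "coset_rep h c = c")
  case True
  have "c \<in> lcoset c (cyclic_subgroup h)"
    by (simp add: mem_lcoset pone_in_cyclic_subgroup)
  have "{x. f x \<noteq> 0 \<and> ccoord x = c} = {x. f x \<noteq> 0 \<and> ccoord x \<in> lcoset c (cyclic_subgroup h)}"
  proof (rule Collect_cong)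
    fix x
    show "f x \<noteq> 0 \<and> ccoord x = c \<longleftrightarrow> f x \<noteq> 0 \<and> ccoord x \<in> lcoset c (cyclic_subgroup h)"
      using assms(2)[of x] coset_rep_eq[of "ccoord x" c h] True \<open>c \<in> lcoset c (cyclic_subgroup h)\<close>
      by auto
  qed
  then have "fibre_sum f (\<lambda>x. ccoord x = c) (\<lambda>x. bdry (bcoord x) p)
      = fibre_sum f (\<lambda>x. ccoord x \<in> lcoset c (cyclic_subgroup h)) (\<lambda>x. bdry (bcoord x) p)"
    by (simp add: fibre_sum_def)
  also have "\<dots> = 0"
    using assms(1) by (auto simp: sum_kernel_def coset_functionals_def)
  finally show ?thesis .
next
  case False
  then have empty: "{x. f x \<noteq> 0 \<and> ccoord x = c} = {}"
    using assms(2) by blast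
  show ?thesis
    unfolding fibre_sum_def empty by simp
qed

theorem sum_kernel_eq_left_ideal: "sum_kernel coset_functionals = left_ideal coset_generators"
proof
  show "sum_kernel coset_functionals \<subseteq> left_ideal coset_generators"
  proof
    fix f
    assume f: "f \<in> sum_kernel coset_functionals"
    then have "f \<in> ZG"
      by (simp add: sum_kernel_def)
    have diff: "f - normal_form f \<in> left_ideal coset_generators"
      using diff_normal_form_in_left_ideal[OF \<open>f \<in> ZG\<close>] .
    then have "f - (f - normal_form f) \<in> sum_kernel coset_functionals"
      using sum_kernel_diff[OF f] left_ideal_coset_generators_subset by blast
    then have normal: "normal_form f \<in> sum_kernel coset_functionals"
      by simp
    then have "normal_form f \<in> ZG"
      by (simp add: sum_kernel_def)
    then have "normal_form f \<in> left_ideal coset_generators"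
      using normal_support_fibre_sum_zero[OF normal normal_form_support]
      by (rule fibrewise_in_left_ideal[OF coset_relations(1,2)])
    then have "normal_form f + (f - normal_form f) \<in> left_ideal coset_generators"
      using diff by (rule left_ideal.add)
    then show "f \<in> left_ideal coset_generators"
      by simp
  qed
qed (rule left_ideal_coset_generators_subset)

end

interpretation horizontal: coset_fibration Pair fst snd T
  by unfold_locales auto

interpretation vertical: coset_fibration "\<lambda>a b. (b, a)" snd fst "pmul U S"
  by unfold_locales auto

lemma I_H_eq_sum_kernel: "I_H = sum_kernel horizontal.coset_functionals"
  by (auto simp: I_H_def sum_kernel_def horizontal.coset_functionals_def fibre_sum_def
      Gamma_inf_def cyclic_subgroup_def)

lemma I_V_eq_sum_kernel: "I_V = sum_kernel vertical.coset_functionals"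
  by (auto simp: I_V_def sum_kernel_def vertical.coset_functionals_def fibre_sum_def
      Gamma_0_def cyclic_subgroup_def)

theorem mainTheorem5:
  shows "I_H = left_ideal {delta (pone,pone) + delta (S,pone),
                           delta (pone,pone) + delta (U,pone) + delta (pmul U U,pone),
                           delta (pone,pone) - delta (pone,T)}
       \<and> I_V = left_ideal {delta (pone,pone) + delta (pone,S),
                           delta (pone,pone) + delta (pone,U) + delta (pone,pmul U U),
                           delta (pone,pone) - delta (pmul U S,pone)}
       \<and> I_D = left_ideal {delta (pone,pone) + delta (S,S),
                           delta (pone,pone) + delta (U,U) + delta (pmul U U,pmul U U)}"
  using horizontal.sum_kernel_eq_left_ideal vertical.sum_kernel_eq_left_ideal I_D_eq_left_ideal
  by (simp add: I_H_eq_sum_kernel I_V_eq_sum_kernel horizontal.coset_generators_def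
      vertical.coset_generators_def diagonal_generators_def)

end
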